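(* Let $\mathbb L$ be an infinite set. The family $\mathcal Q=\{Q^<_{AB}: A,B\in\mathbb W,\ |A|<|B|\}\cup\{C(d):d\in\mathbb I\}$, where $Q^<_{AB}=\{i\in\mathbb I:|A_i|<|B_i|\}$ and $C(d)=\{i\in\mathbb I: d\subseteq i\}$, has the finite intersection property. Consequently there is a fine ultrafilter $\mathcal U\supseteq\mathcal Q$ on $\mathbb I$, and for any such $\mathcal U$ the finitely approximable numerosity theory $\preceq_{\mathcal U}$ (defined by $A\preceq_{\mathcal U}B$ iff $\{i\in\mathbb I:|A_i|\le|B_i|\}\in\mathcal U$) satisfies the Weak Hume Principle: for all $A,B\in\mathbb W$, if $A\preceq_{\mathcal U}B$ then there is an injective map $f:A\to B$ (equivalently, $|A|\le|B|$).
   Context: A point over $\mathbb L$ is either an element of $\mathbb L$ or a finite tuple $(x_1,\dots,x_n)$, $n\ge1$, of points over $\mathbb L$ ($\mathbb L$ contains no tuples of points); $P$ is the set of all points; $supp(x)=\{x\}$ for $x\in\mathbb L$ and $supp(x_1,\dots,x_n)=\bigcup_k supp(x_k)$. $\mathbb W$ is the family of finitary point sets: $A\subseteq P$ such that $\{a\in A:supp(a)=i\}$ is finite for every finite $i\subseteq\mathbb L$. $\mathbb I=[\mathbb L]^{<\omega}$ is the set of finite subsets of $\mathbb L$, and $A_i=\{a\in A:supp(a)\subseteq i\}$. A filter on $\mathbb I$ is fine if it contains every cone $C(d)$, $d\in\mathbb I$. *)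

theory Defs
  imports Main
begin

text \<open>Points over the ground set L (taken to be the universe of the type 'a).
  A tuple is represented by a list of points; well-formed points require
  nonempty tuples.\<close>

datatype 'a point = Atom 'a | Tup "'a point list"

inductive is_point :: "'a point \<Rightarrow> bool" where
  atom: "is_point (Atom x)"
| tup: "xs \<noteq> [] \<Longrightarrow> (\<forall>y\<in>set xs. is_point y) \<Longrightarrow> is_point (Tup xs)"

definition Points :: "'a point set" where
  "Points = {p. is_point p}"

fun supp :: "'a point \<Rightarrow> 'a set" where
  "supp (Atom x) = {x}"
| "supp (Tup xs) = (\<Union>y\<in>set xs. supp y)"

definition W :: "'a point set set" where
  "W = {A. A \<subseteq> Points \<and> (\<forall>i. finite i \<longrightarrow> finite {a\<in>A. supp a = i})}"

definition Iset :: "'a set set" where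
  "Iset = {i. finite i}"

definition restr :: "'a point set \<Rightarrow> 'a set \<Rightarrow> 'a point set" where
  "restr A i = {a\<in>A. supp a \<subseteq> i}"

definition cone :: "'a set \<Rightarrow> 'a set set" where
  "cone d = {i\<in>Iset. d \<subseteq> i}"

definition Qlt :: "'a point set \<Rightarrow> 'a point set \<Rightarrow> 'a set set" where
  "Qlt A B = {i\<in>Iset. card (restr A i) < card (restr B i)}"

definition Qfam :: "'a set set set" where
  "Qfam = {Qlt A B | A B. A \<in> W \<and> B \<in> W \<and> (card_of A, card_of B) \<in> ordLess} \<union> {cone d | d. d \<in> Iset}"

definition fip :: "'b set set \<Rightarrow> bool" where
  "fip F \<longleftrightarrow> (\<forall>G. finite G \<and> G \<noteq> {} \<and> G \<subseteq> F \<longrightarrow> \<Inter>G \<noteq> {})"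

definition ultrafilter_on :: "'b set \<Rightarrow> 'b set set \<Rightarrow> bool" where
  "ultrafilter_on I U \<longleftrightarrow>
     U \<subseteq> Pow I \<and> I \<in> U \<and> {} \<notin> U \<and>
     (\<forall>X\<in>U. \<forall>Y\<in>U. X \<inter> Y \<in> U) \<and>
     (\<forall>X\<in>U. \<forall>Y. X \<subseteq> Y \<and> Y \<subseteq> I \<longrightarrow> Y \<in> U) \<and>
     (\<forall>X. X \<subseteq> I \<longrightarrow> X \<in> U \<or> I - X \<in> U)"

definition fine :: "'a set set set \<Rightarrow> bool" where
  "fine U \<longleftrightarrow> (\<forall>d\<in>Iset. cone d \<in> U)"

definition num_le :: "'a set set set \<Rightarrow> 'a point set \<Rightarrow> 'a point set \<Rightarrow> bool" where
  "num_le U A B \<longleftrightarrow> {i\<in>Iset. card (restr A i) \<le> card (restr B i)} \<in> U"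

end

theory Submission
  imports Defs "HOL-Algebra.Free_Abelian_Groups"
begin

(* The second import is only a route to HOL-Cardinals (card_of_Fpow_infinite etc.). *)

text \<open>
  Everything rests on a separation property: for finitely many pairs |A_k| < |B_k| of
  finitary sets and a finite d, some finite i containing d has |(A_k)_i| < |(B_k)_i| for
  all k. Induct on the number of pairs, treating last a pair whose B_k is largest. If B_k
  is finite, any i containing the supports of all points of A_k and B_k works. Otherwise
  the set S of atoms occurring in the A_j is smaller than B_k, so infinitely many b in B_k
  have the same finite trace t = supp b \<inter> S. Take i' for the other pairs with d \<union> t \<subseteq> i'
  and add the supports of |(A_k)_i'| + 1 such points b: the new atoms lie outside S, so no
  A_j gains an element, while the B_j can only grow.

  Hence the family has the finite intersection property and extends to an ultrafilter by
  Zorn's lemma. If |B| < |A|, the set Q_BA lies in the ultrafilter and is disjoint from the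
  set witnessing A \<preceq> B, which gives the Weak Hume Principle.
\<close>

lemma fip_insert:
  assumes "fip M" and "\<And>G. finite G \<Longrightarrow> G \<subseteq> M \<Longrightarrow> Z \<inter> \<Inter>G \<noteq> {}"
  shows "fip (insert Z M)"
  unfolding fip_def
proof (intro allI impI, elim conjE)
  fix G assume G: "finite G" "G \<noteq> {}" "G \<subseteq> insert Z M"
  show "\<Inter>G \<noteq> {}"
  proof (cases "Z \<in> G")
    case True
    then have "\<Inter>G = Z \<inter> \<Inter>(G - {Z})" by blast
    then show ?thesis using assms(2)[of "G - {Z}"] G by auto
  next
    case False
    then show ?thesis using assms(1) G unfolding fip_def by blast
  qed
qed

lemma maximal_fip_mem:
  assumes "fip M" "M \<subseteq> Pow I"
    and maximal: "\<And>N. M \<subseteq> N \<Longrightarrow> N \<subseteq> Pow I \<Longrightarrow> fip N \<Longrightarrow> N = M"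
    and "Z \<subseteq> I" "\<And>G. finite G \<Longrightarrow> G \<subseteq> M \<Longrightarrow> Z \<inter> \<Inter>G \<noteq> {}"
  shows "Z \<in> M"
proof -
  have "insert Z M = M"
    by (rule maximal) (use assms(2,4) fip_insert[OF assms(1,5)] in auto)
  then show ?thesis by blast
qed

lemma maximal_fip_ultrafilter_on:
  assumes fip: "fip M" and M: "M \<subseteq> Pow I" and "I \<noteq> {}"
    and maximal: "\<And>N. M \<subseteq> N \<Longrightarrow> N \<subseteq> Pow I \<Longrightarrow> fip N \<Longrightarrow> N = M"
  shows "ultrafilter_on I M"
proof -
  have nonempty: "\<Inter>G \<noteq> {}" if "finite G" "G \<noteq> {}" "G \<subseteq> M" for G
    using fip that unfolding fip_def by blast
  have mem: "Z \<in> M" if "Z \<subseteq> I" "\<And>G. finite G \<Longrightarrow> G \<subseteq> M \<Longrightarrow> Z \<inter> \<Inter>G \<noteq> {}" for Z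
    using fip M maximal that by (rule maximal_fip_mem)
  have I: "I \<in> M"
  proof (rule mem)
    show "I \<subseteq> I" by simp
    fix G assume G: "finite G" "G \<subseteq> M"
    show "I \<inter> \<Inter>G \<noteq> {}"
    proof (cases "G = {}")
      case False
      then have "\<Inter>G \<subseteq> I" using G(2) M by blast
      then show ?thesis using nonempty[OF G(1) False G(2)] by blast
    qed (use \<open>I \<noteq> {}\<close> in simp)
  qed
  have Int: "X \<inter> Y \<in> M" if "X \<in> M" "Y \<in> M" for X Y
  proof (rule mem)
    show "X \<inter> Y \<subseteq> I" using that M by blast
    fix G assume "finite G" "G \<subseteq> M"
    then show "X \<inter> Y \<inter> \<Inter>G \<noteq> {}"
      using nonempty[of "insert X (insert Y G)"] that by (simp add: Int_assoc)
  qed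
  have superset: "Y \<in> M" if "X \<in> M" "X \<subseteq> Y" "Y \<subseteq> I" for X Y
  proof (rule mem[OF that(3)])
    fix G assume "finite G" "G \<subseteq> M"
    then have "\<Inter>(insert X G) \<noteq> {}" using nonempty[of "insert X G"] that(1) by simp
    then show "Y \<inter> \<Inter>G \<noteq> {}" using that(2) by blast
  qed
  have compl: "X \<in> M \<or> I - X \<in> M" if "X \<subseteq> I" for X
  proof (rule ccontr)
    assume "\<not> (X \<in> M \<or> I - X \<in> M)"
    then have "\<exists>G1. finite G1 \<and> G1 \<subseteq> M \<and> X \<inter> \<Inter>G1 = {}"
      and "\<exists>G2. finite G2 \<and> G2 \<subseteq> M \<and> (I - X) \<inter> \<Inter>G2 = {}"
      using mem[of X] mem[of "I - X"] that by (meson Diff_subset)+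
    then obtain G1 G2 where G: "finite G1" "G1 \<subseteq> M" "X \<inter> \<Inter>G1 = {}"
      "finite G2" "G2 \<subseteq> M" "(I - X) \<inter> \<Inter>G2 = {}"
      by blast
    have "x \<notin> \<Inter>(insert I (G1 \<union> G2))" for x
      using G(3,6) by (cases "x \<in> X") auto
    then have "\<Inter>(insert I (G1 \<union> G2)) = {}" by blast
    then show False using nonempty[of "insert I (G1 \<union> G2)"] G I by simp
  qed
  have empty: "{} \<notin> M" using nonempty[of "{{}}"] by blast
  show ?thesis
    unfolding ultrafilter_on_def
  proof (intro conjI ballI allI impI)
    fix X Y assume "X \<in> M" "X \<subseteq> Y \<and> Y \<subseteq> I"
    then show "Y \<in> M" using superset by blast
  next
    show "M \<subseteq> Pow I" by (fact M)
    show "I \<in> M" by (fact I)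
    show "{} \<notin> M" by (fact empty)
  next
    fix X Y assume "X \<in> M" "Y \<in> M"
    then show "X \<inter> Y \<in> M" by (rule Int)
  next
    fix X assume "X \<subseteq> I"
    then show "X \<in> M \<or> I - X \<in> M" by (rule compl)
  qed
qed

lemma fip_ultrafilter_extension:
  assumes "fip F" "F \<subseteq> Pow I" "I \<noteq> {}"
  obtains U where "ultrafilter_on I U" "F \<subseteq> U"
proof -
  let ?A = "{M. F \<subseteq> M \<and> M \<subseteq> Pow I \<and> fip M}"
  have "\<exists>M\<in>?A. \<forall>N\<in>?A. M \<subseteq> N \<longrightarrow> N = M"
  proof (rule subset_Zorn_nonempty)
    show "?A \<noteq> {}" using assms(1,2) by blast
    fix C assume C: "C \<noteq> {}" "subset.chain ?A C"
    then have CA: "\<And>M. M \<in> C \<Longrightarrow> F \<subseteq> M \<and> M \<subseteq> Pow I \<and> fip M"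
      unfolding subset_chain_def by blast
    have "fip (\<Union>C)"
      unfolding fip_def
    proof (intro allI impI, elim conjE)
      fix G assume G: "finite G" "G \<noteq> {}" "G \<subseteq> \<Union>C"
      obtain M where "M \<in> C" "G \<subseteq> M"
        using finite_subset_Union_chain[OF G(1,3) C] .
      with CA G(1,2) show "\<Inter>G \<noteq> {}" unfolding fip_def by blast
    qed
    moreover have "F \<subseteq> \<Union>C" "\<Union>C \<subseteq> Pow I" using C(1) CA by blast+
    ultimately show "\<Union>C \<in> ?A" by blast
  qed
  then obtain M where M: "M \<in> ?A" and max: "\<forall>N\<in>?A. M \<subseteq> N \<longrightarrow> N = M" ..
  have "ultrafilter_on I M"
  proof (rule maximal_fip_ultrafilter_on)
    show "fip M" "M \<subseteq> Pow I" using M by simp_all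
    fix N assume "M \<subseteq> N" "N \<subseteq> Pow I" "fip N"
    with M have "N \<in> ?A" by auto
    with max \<open>M \<subseteq> N\<close> show "N = M" by blast
  qed (fact assms(3))
  then show thesis using that M by simp
qed

lemma finite_supp [simp]: "finite (supp a)"
  by (induction a) auto

lemma finite_restr:
  assumes "A \<in> W" "finite i"
  shows "finite (restr A i)"
proof -
  have "restr A i \<subseteq> (\<Union>j\<in>Pow i. {a\<in>A. supp a = j})"
    unfolding restr_def by blast
  moreover have "finite {a\<in>A. supp a = j}" if "j \<in> Pow i" for j
    using assms finite_subset[of j i] that unfolding W_def by blast
  ultimately show ?thesis
    using assms(2) by (meson finite_Pow_iff finite_UN_I finite_subset)
qed

lemma card_restr_mono:
  assumes "A \<in> W" "finite j" "i \<subseteq> j"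
  shows "card (restr A i) \<le> card (restr A j)"
  using assms finite_restr unfolding restr_def by (blast intro: card_mono)

lemma restr_eq_self: "\<Union>(supp ` A) \<subseteq> i \<Longrightarrow> restr A i = A"
  unfolding restr_def by blast

lemma restr_Un_supp_outside:
  assumes "\<Union>(supp ` A) \<subseteq> S" "\<forall>b\<in>D. supp b \<inter> S \<subseteq> i"
  shows "restr A (i \<union> \<Union>(supp ` D)) = restr A i"
  using assms unfolding restr_def by blast

(* Plain cone would denote the cardinal one of HOL-Cardinals. *)
lemma cone_antimono: "d \<subseteq> e \<Longrightarrow> Defs.cone e \<subseteq> Defs.cone d"
  unfolding Defs.cone_def by blast

lemma Qlt_enlarge:
  assumes "i \<in> Qlt A B" "B \<in> W" "finite j" "i \<subseteq> j" "restr A j = restr A i"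
  shows "j \<in> Qlt A B"
  using assms card_restr_mono[of B j i] unfolding Qlt_def Iset_def by fastforce

context includes cardinal_syntax
begin

lemma card_of_UN_supp_ordLess:
  assumes "|A| <o |B|" "infinite B"
  shows "|\<Union>(supp ` A)| <o |B|"
proof (cases "finite A")
  case True
  then show ?thesis using assms(2) by (intro finite_ordLess_infinite2) simp_all
next
  case False
  have "|supp a| \<le>o |A|" for a
    using False by (meson finite_supp ordLess_imp_ordLeq finite_ordLess_infinite2)
  then have "|\<Union>(supp ` A)| \<le>o |A|"
    using False by (intro card_of_UNION_ordLeq_infinite) (auto intro: ordLeq_reflexive)
  then show ?thesis using assms(1) ordLeq_ordLess_trans by blast
qed

lemma card_of_finite_UN_ordLess_infinite:
  assumes "finite K" "infinite C" "\<forall>k\<in>K. |X k| <o |C|"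
  shows "|\<Union>k\<in>K. X k| <o |C|"
  using assms by (induction K rule: finite_induct) (simp_all add: card_of_Un_ordLess_infinite)

lemma ex_card_of_maximal:
  assumes "finite K" "K \<noteq> {}"
  obtains k where "k \<in> K" "\<forall>j\<in>K. |B j| \<le>o |B k|"
proof -
  have "\<exists>k\<in>K. \<forall>j\<in>K. |B j| \<le>o |B k|"
    using assms
  proof (induction K rule: finite_ne_induct)
    case (singleton x)
    then show ?case by (simp add: ordLeq_reflexive)
  next
    case (insert x K)
    then obtain k where "k \<in> K" "\<forall>j\<in>K. |B j| \<le>o |B k|" by blast
    moreover have "|B x| \<le>o |B k| \<or> |B k| \<le>o |B x|"
      by (rule ordLeq_total) simp_all
    ultimately show ?case by (metis insert_iff ordLeq_reflexive ordLeq_transitive card_of_Well_order)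
  qed
  then show thesis using that by blast
qed

lemma infinite_supp_trace_class:
  assumes "infinite B" "|S| <o |B|"
  obtains t where "t \<in> Fpow S" "infinite {b\<in>B. supp b \<inter> S = t}"
proof -
  have "\<exists>t\<in>Fpow S. infinite {b\<in>B. supp b \<inter> S = t}"
  proof (rule ccontr)
    assume "\<not> ?thesis"
    then have classes: "\<forall>t\<in>Fpow S. finite {b\<in>B. supp b \<inter> S = t}" by blast
    have B: "B = (\<Union>t\<in>Fpow S. {b\<in>B. supp b \<inter> S = t})"
      using finite_supp unfolding Fpow_def by blast
    show False
    proof (cases "finite S")
      case True
      then have "finite (Fpow S)" by (simp add: Fpow_Pow_finite)
      then have "finite B" using classes by (subst B) blast
      with assms(1) show False ..
    next
      case False
      then have "|\<Union>t\<in>Fpow S. {b\<in>B. supp b \<inter> S = t}| \<le>o |S|"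
        using classes
        by (intro card_of_UNION_ordLeq_infinite ballI)
          (simp_all add: card_of_Fpow_infinite ordIso_imp_ordLeq ordLess_imp_ordLeq)
      with B assms(2) show False using not_ordLess_ordLeq by force
    qed
  qed
  then show thesis using that by blast
qed

lemma exists_in_cone_Qlt_step_finite:
  assumes "finite (B k)" "|A k| <o |B k|" "finite d"
    and IH: "\<And>e. finite e \<Longrightarrow> \<exists>i\<in>Defs.cone e. \<forall>j\<in>K - {k}. i \<in> Qlt (A j) (B j)"
  shows "\<exists>i\<in>Defs.cone d. \<forall>j\<in>K. i \<in> Qlt (A j) (B j)"
proof -
  have "finite (A k)" using assms(1,2) ordLess_imp_ordLeq card_of_ordLeq_finite by blast
  then have "finite (d \<union> \<Union>(supp ` (A k \<union> B k)))" using assms(1,3) by simp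
  then obtain i where i: "i \<in> Defs.cone (d \<union> \<Union>(supp ` (A k \<union> B k)))"
    and others: "\<forall>j\<in>K - {k}. i \<in> Qlt (A j) (B j)"
    using IH by blast
  then have "restr (A k) i = A k" "restr (B k) i = B k"
    unfolding Defs.cone_def by (auto intro!: restr_eq_self)
  moreover have "card (A k) < card (B k)"
    using finite_card_of_iff_card3[OF \<open>finite (A k)\<close> assms(1)] assms(2) by simp
  ultimately have "i \<in> Qlt (A k) (B k)"
    using i unfolding Qlt_def Defs.cone_def by simp
  moreover have "i \<in> Defs.cone d" using cone_antimono[OF Un_upper1] i by blast
  ultimately show ?thesis using others by (metis DiffI singletonD)
qed

lemma exists_in_cone_Qlt_step_infinite:
  assumes "finite K" "k \<in> K" "\<forall>j\<in>K. A j \<in> W \<and> B j \<in> W"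
    and small: "\<forall>j\<in>K. |A j| <o |B k|" and "infinite (B k)" "finite d"
    and IH: "\<And>e. finite e \<Longrightarrow> \<exists>i\<in>Defs.cone e. \<forall>j\<in>K - {k}. i \<in> Qlt (A j) (B j)"
  shows "\<exists>i\<in>Defs.cone d. \<forall>j\<in>K. i \<in> Qlt (A j) (B j)"
proof -
  define S where "S = (\<Union>j\<in>K. \<Union>(supp ` A j))"
  have "|S| <o |B k|"
    unfolding S_def using assms(1,5) small
    by (intro card_of_finite_UN_ordLess_infinite ballI card_of_UN_supp_ordLess) auto
  then obtain t where t: "t \<in> Fpow S" "infinite {b\<in>B k. supp b \<inter> S = t}"
    using infinite_supp_trace_class assms(5) by blast
  then obtain i' where i': "i' \<in> Defs.cone (d \<union> t)" "\<forall>j\<in>K - {k}. i' \<in> Qlt (A j) (B j)"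
    using IH assms(6) unfolding Fpow_def by blast
  obtain D where D: "finite D" "card D = Suc (card (restr (A k) i'))"
    "D \<subseteq> {b\<in>B k. supp b \<inter> S = t}"
    using infinite_arbitrarily_large[OF t(2)] by blast
  define i where "i = i' \<union> \<Union>(supp ` D)"
  have "finite i" "i' \<subseteq> i"
    using D(1) i'(1) unfolding i_def Defs.cone_def Iset_def by auto
  have same: "restr (A j) i = restr (A j) i'" if "j \<in> K" for j
    unfolding i_def using that D(3) i'(1)
    by (intro restr_Un_supp_outside[where S = S]) (auto simp: S_def Defs.cone_def)
  have "B k \<in> W" using assms(2,3) by simp
  moreover have "D \<subseteq> restr (B k) i" using D(3) unfolding restr_def i_def by blast
  ultimately have "card D \<le> card (restr (B k) i)"
    using \<open>finite i\<close> by (intro card_mono finite_restr)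
  moreover have "card (restr (A k) i) < card D" using same[OF assms(2)] D(2) by simp
  ultimately have k: "i \<in> Qlt (A k) (B k)" using \<open>finite i\<close> unfolding Qlt_def Iset_def by simp
  have "i \<in> Qlt (A j) (B j)" if "j \<in> K" for j
  proof (cases "j = k")
    case False
    with that have "i' \<in> Qlt (A j) (B j)" using i'(2) by simp
    moreover have "B j \<in> W" using assms(3) that by simp
    ultimately show ?thesis by (rule Qlt_enlarge[OF _ _ \<open>finite i\<close> \<open>i' \<subseteq> i\<close> same[OF that]])
  qed (use k in simp)
  moreover have "i \<in> Defs.cone d"
    using i'(1) \<open>finite i\<close> \<open>i' \<subseteq> i\<close> unfolding Defs.cone_def Iset_def by blast
  ultimately show ?thesis by blast
qed

lemma exists_in_cone_Qlt:
  assumes "finite K" "\<forall>k\<in>K. A k \<in> W \<and> B k \<in> W \<and> |A k| <o |B k|" "finite d"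
  shows "\<exists>i\<in>Defs.cone d. \<forall>k\<in>K. i \<in> Qlt (A k) (B k)"
  using assms
proof (induction K arbitrary: d rule: finite_remove_induct)
  case empty
  then show ?case unfolding Defs.cone_def Iset_def by blast
next
  case (remove K)
  obtain k where k: "k \<in> K" "\<forall>j\<in>K. |B j| \<le>o |B k|"
    using ex_card_of_maximal[OF remove(1,2)] .
  have IH: "\<exists>i\<in>Defs.cone e. \<forall>j\<in>K - {k}. i \<in> Qlt (A j) (B j)" if "finite e" for e
    using remove.prems(1) by (intro remove.IH[OF k(1) _ that]) simp
  have Ak: "|A k| <o |B k|" using remove.prems(1) k(1) by blast
  show ?case
  proof (cases "finite (B k)")
    case True
    show ?thesis by (rule exists_in_cone_Qlt_step_finite[OF True Ak remove.prems(2) IH])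
  next
    case False
    have W: "\<forall>j\<in>K. A j \<in> W \<and> B j \<in> W" using remove.prems(1) by blast
    have small: "\<forall>j\<in>K. |A j| <o |B k|" using k(2) remove.prems(1) ordLess_ordLeq_trans by blast
    show ?thesis
      by (rule exists_in_cone_Qlt_step_infinite[OF remove(1) k(1) W small False remove.prems(2) IH])
  qed
qed

lemma fip_Qfam: "fip Qfam"
  unfolding fip_def
proof (intro allI impI, elim conjE)
  fix G :: "'a set set set"
  assume G: "finite G" "G \<noteq> {}" "G \<subseteq> Qfam"
  define Gq where "Gq = G \<inter> {Qlt A B | A B. A \<in> W \<and> B \<in> W \<and> |A| <o |B|}"
  have "\<forall>X\<in>Gq. \<exists>p. X = Qlt (fst p) (snd p) \<and> fst p \<in> W \<and> snd p \<in> W \<and> |fst p| <o |snd p|"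
    unfolding Gq_def by force
  then obtain p where p: "\<forall>X\<in>Gq. X = Qlt (fst (p X)) (snd (p X))
      \<and> fst (p X) \<in> W \<and> snd (p X) \<in> W \<and> |fst (p X)| <o |snd (p X)|"
    by (rule bchoice[THEN exE])
  have "\<forall>X\<in>G - Gq. \<exists>e. X = Defs.cone e \<and> finite e"
    using G(3) unfolding Qfam_def Gq_def Iset_def by blast
  then obtain d where d: "\<forall>X\<in>G - Gq. X = Defs.cone (d X) \<and> finite (d X)"
    by (rule bchoice[THEN exE])
  have "finite Gq" "finite (\<Union>(d ` (G - Gq)))" using G(1) d unfolding Gq_def by auto
  then obtain i where i: "i \<in> Defs.cone (\<Union>(d ` (G - Gq)))"
    and Qlt: "\<forall>X\<in>Gq. i \<in> Qlt (fst (p X)) (snd (p X))"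
    using exists_in_cone_Qlt[of Gq "\<lambda>X. fst (p X)" "\<lambda>X. snd (p X)"] p by blast
  have "i \<in> X" if "X \<in> G" for X
  proof (cases "X \<in> Gq")
    case True
    then show ?thesis using p Qlt by simp
  next
    case False
    with that d have "X = Defs.cone (d X)" "d X \<subseteq> \<Union>(d ` (G - Gq))" by auto
    then show ?thesis using cone_antimono i by blast
  qed
  then show "\<Inter>G \<noteq> {}" by blast
qed

lemma num_le_imp_card_of_ordLeq:
  assumes U: "ultrafilter_on Iset U" "Qfam \<subseteq> U" and "A \<in> W" "B \<in> W" "num_le U A B"
  shows "|A| \<le>o |B|"
proof (rule ccontr)
  assume "\<not> |A| \<le>o |B|"
  then have "|B| <o |A|" by (simp add: not_ordLeq_iff_ordLess)
  with assms(3,4) U(2) have "Qlt B A \<in> U" unfolding Qfam_def by blast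
  moreover have "{i\<in>Iset. card (restr A i) \<le> card (restr B i)} \<in> U"
    using assms(5) unfolding num_le_def .
  ultimately have "Qlt B A \<inter> {i\<in>Iset. card (restr A i) \<le> card (restr B i)} \<in> U"
    using U(1) unfolding ultrafilter_on_def by blast
  moreover have "Qlt B A \<inter> {i\<in>Iset. card (restr A i) \<le> card (restr B i)} = {}"
    unfolding Qlt_def by auto
  ultimately show False using U(1) unfolding ultrafilter_on_def by simp
qed

end

theorem mainTheorem9:
  assumes "infinite (UNIV :: 'a set)"
  shows "fip (Qfam :: 'a set set set)
     \<and> (\<exists>U. ultrafilter_on (Iset :: 'a set set) U \<and> fine U \<and> Qfam \<subseteq> U)
     \<and> (\<forall>U. ultrafilter_on (Iset :: 'a set set) U \<and> fine U \<and> Qfam \<subseteq> U \<longrightarrow>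
          (\<forall>A\<in>W. \<forall>B\<in>W. num_le U A B \<longrightarrow> (\<exists>f. inj_on f A \<and> f ` A \<subseteq> B)))"
proof (intro conjI allI impI ballI)
  show "fip (Qfam :: 'a set set set)" by (rule fip_Qfam)
  have "Qfam \<subseteq> Pow (Iset :: 'a set set)"
    unfolding Qfam_def Qlt_def Defs.cone_def by blast
  moreover have "(Iset :: 'a set set) \<noteq> {}" unfolding Iset_def by blast
  ultimately obtain U :: "'a set set set" where U: "ultrafilter_on Iset U" "Qfam \<subseteq> U"
    using fip_ultrafilter_extension[OF fip_Qfam] by blast
  moreover from U(2) have "fine U" unfolding fine_def Qfam_def by blast
  ultimately show "\<exists>U. ultrafilter_on (Iset :: 'a set set) U \<and> fine U \<and> Qfam \<subseteq> U" by blast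
next
  fix U :: "'a set set set" and A B
  assume "ultrafilter_on Iset U \<and> fine U \<and> Qfam \<subseteq> U" "A \<in> W" "B \<in> W" "num_le U A B"
  then show "\<exists>f. inj_on f A \<and> f ` A \<subseteq> B"
    unfolding card_of_ordLeq by (blast intro: num_le_imp_card_of_ordLeq)
qed

end
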